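(* Let $1,2,3,4$ be four distinct vertices of $G$ such that $G[\{1,2,3,4\}]$ has edge set exactly $\{12,23,24,34\}$ and $w_{23}\ge w_{24}$. If $\Gamma_G$ is population monotonic, then $w_{23}\ge w_{12}+w_{34}$ and $w_{23}\ge w_{24}+w_{34}$.
   Context: $G=(V,E;w)$ is a finite simple graph with edge weights $w:E\to\mathbb{R}$, $w_e>0$ for all $e\in E$; $w_{ij}$ denotes the weight of edge $ij$. The matching game on $G$ is the cooperative game $\Gamma_G=(N,\gamma)$ with player set $N=V$ and, for $S\subseteq N$, $\gamma(S)$ equal to the maximum weight of a matching in the induced subgraph $G[S]$ (so $\gamma(\emptyset)=0$). A population monotonic allocation scheme (PMAS) is a family $(\boldsymbol{x}_S)_{\emptyset\neq S\subseteq N}$ with $\boldsymbol{x}_S=(x_{S,i})_{i\in S}\in\mathbb{R}^S$ such that (efficiency) $\sum_{i\in S}x_{S,i}=\gamma(S)$ for every nonempty $S\subseteq N$, and (monotonicity) $x_{S,i}\le x_{T,i}$ whenever $\emptyset\ne S\subseteq T\subseteq N$ and $i\in S$. $\Gamma_G$ is called population monotonic if it admits a PMAS. *)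

theory Defs
  imports Complex_Main
begin

definition simple_graph :: "'a set \<Rightarrow> 'a set set \<Rightarrow> bool" where
  "simple_graph V E \<longleftrightarrow> finite V \<and> (\<forall>e\<in>E. e \<subseteq> V \<and> card e = 2)"

definition matching_in :: "'a set set \<Rightarrow> 'a set \<Rightarrow> 'a set set \<Rightarrow> bool" where
  "matching_in E S M \<longleftrightarrow> M \<subseteq> E \<and> (\<forall>e\<in>M. e \<subseteq> S) \<and>
     (\<forall>e\<in>M. \<forall>f\<in>M. e \<noteq> f \<longrightarrow> e \<inter> f = {})"

definition gamma :: "'a set set \<Rightarrow> ('a set \<Rightarrow> real) \<Rightarrow> 'a set \<Rightarrow> real" where
  "gamma E w S = Max ((\<lambda>M. \<Sum>e\<in>M. w e) ` {M. matching_in E S M})"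

text \<open>Population monotonic allocation scheme for the game (V, gamma E w):
x S i is the payoff of player i in coalition S.\<close>

definition is_PMAS :: "'a set \<Rightarrow> 'a set set \<Rightarrow> ('a set \<Rightarrow> real) \<Rightarrow> ('a set \<Rightarrow> 'a \<Rightarrow> real) \<Rightarrow> bool" where
  "is_PMAS V E w x \<longleftrightarrow>
     (\<forall>S. S \<subseteq> V \<and> S \<noteq> {} \<longrightarrow> (\<Sum>i\<in>S. x S i) = gamma E w S) \<and>
     (\<forall>S T i. S \<noteq> {} \<and> S \<subseteq> T \<and> T \<subseteq> V \<and> i \<in> S \<longrightarrow> x S i \<le> x T i)"

definition population_monotonic :: "'a set \<Rightarrow> 'a set set \<Rightarrow> ('a set \<Rightarrow> real) \<Rightarrow> bool" where
  "population_monotonic V E w \<longleftrightarrow> (\<exists>x. is_PMAS V E w x)"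

end

theory Submission
  imports Defs
begin

text \<open>Monotonicity lets every player of a coalition keep what it earns in a smaller one.
Inside {1,2,3} let 1,2 keep their payoffs from {1,2} and 3 its payoff from {2,3}; inside
{2,3,4} let 3,4 keep their payoffs from {3,4} and 2 its payoff from {2,3}. Adding up gives
\<open>\<gamma>{1,2} + \<gamma>{2,3} + \<gamma>{3,4} \<le> \<gamma>{1,2,3} + \<gamma>{2,3,4}\<close>. On three vertices a matching has at
most one edge, so the right-hand side is at most \<open>max w\<^sub>1\<^sub>2 w\<^sub>2\<^sub>3 + max w\<^sub>2\<^sub>3 w\<^sub>3\<^sub>4\<close>, and
positivity forces \<open>w\<^sub>2\<^sub>3 \<ge> w\<^sub>1\<^sub>2 + w\<^sub>3\<^sub>4\<close>. The same argument along the closed walk 3-2-4-3,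
whose two triples are both {2,3,4}, gives \<open>w\<^sub>2\<^sub>3 + w\<^sub>2\<^sub>4 + w\<^sub>3\<^sub>4 \<le> 2 \<gamma>{2,3,4}\<close>, and
\<open>\<gamma>{2,3,4} = w\<^sub>2\<^sub>3\<close> by the first inequality.\<close>

lemma simple_graph_finite_edges:
  assumes "simple_graph V E"
  shows "finite E"
proof -
  have "E \<subseteq> Pow V" and "finite V"
    using assms unfolding simple_graph_def by auto
  then show ?thesis
    by (meson finite_Pow_iff finite_subset)
qed

lemma finite_matchings:
  assumes "finite E"
  shows "finite {M. matching_in E S M}"
  by (rule finite_subset[of _ "Pow E"]) (auto simp: matching_in_def assms)

lemma gamma_attained:
  assumes "finite E"
  obtains M where "matching_in E S M" "gamma E w S = sum w M"
proof -
  have "matching_in E S {}"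
    by (simp add: matching_in_def)
  then have "gamma E w S \<in> (\<lambda>M. \<Sum>e\<in>M. w e) ` {M. matching_in E S M}"
    unfolding gamma_def using finite_matchings[OF assms] by (intro Max_in) auto
  then show ?thesis
    using that by auto
qed

lemma edge_weight_le_gamma:
  assumes "finite E" "e \<in> E" "e \<subseteq> S"
  shows "w e \<le> gamma E w S"
proof -
  have "matching_in E S {e}"
    using assms by (simp add: matching_in_def)
  then have "w e \<in> (\<lambda>M. \<Sum>e\<in>M. w e) ` {M. matching_in E S M}"
    by (intro rev_image_eqI) auto
  then show ?thesis
    unfolding gamma_def using finite_matchings[OF assms(1)] by (intro Max_ge) auto
qed

lemma gamma_le_if_edges_intersect:
  assumes "finite E"
    and meet: "pairwise (\<lambda>e f. e \<inter> f \<noteq> {}) {e \<in> E. e \<subseteq> S}"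
    and bound: "\<And>e. e \<in> E \<Longrightarrow> e \<subseteq> S \<Longrightarrow> w e \<le> c"
    and "0 \<le> c"
  shows "gamma E w S \<le> c"
proof -
  obtain M where M: "matching_in E S M" "gamma E w S = sum w M"
    using gamma_attained[OF assms(1)] .
  show ?thesis
  proof (cases "M = {}")
    case False
    then obtain e where e: "e \<in> M" by blast
    have e_in: "e \<in> E" "e \<subseteq> S"
      using M(1) e unfolding matching_in_def by auto
    have "f = e" if "f \<in> M" for f
    proof (rule ccontr)
      assume "f \<noteq> e"
      then have "f \<inter> e = {}"
        using M(1) e that unfolding matching_in_def by blast
      moreover have "f \<in> E" "f \<subseteq> S"
        using M(1) that unfolding matching_in_def by auto
      ultimately show False
        using meet e_in \<open>f \<noteq> e\<close> unfolding pairwise_def by blast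
    qed
    then have "M = {e}"
      using e by blast
    then show ?thesis
      using M(2) bound[OF e_in] by simp
  qed (use M(2) \<open>0 \<le> c\<close> in simp)
qed

lemma edges_in_triple_intersect:
  assumes "simple_graph V E" "S \<subseteq> V" "card S \<le> 3"
  shows "pairwise (\<lambda>e f. e \<inter> f \<noteq> {}) {e \<in> E. e \<subseteq> S}"
proof (rule pairwiseI)
  fix e f
  assume e: "e \<in> {e \<in> E. e \<subseteq> S}" and f: "f \<in> {e \<in> E. e \<subseteq> S}"
  have "finite S"
    using assms(1,2) finite_subset unfolding simple_graph_def by blast
  have "card e = 2" "card f = 2"
    using assms(1) e f unfolding simple_graph_def by auto
  show "e \<inter> f \<noteq> {}"
  proof
    assume "e \<inter> f = {}"
    then have "card (e \<union> f) = 4"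
      using \<open>card e = 2\<close> \<open>card f = 2\<close> by (simp add: card_Un_disjoint card_ge_0_finite)
    moreover have "card (e \<union> f) \<le> card S"
      using e f \<open>finite S\<close> by (intro card_mono) auto
    ultimately show False
      using assms(3) by simp
  qed
qed

lemma gamma_le_on_triple:
  assumes "simple_graph V E" "S \<subseteq> V" "card S \<le> 3" "0 \<le> c"
    and "\<And>e. e \<in> E \<Longrightarrow> e \<subseteq> S \<Longrightarrow> w e \<le> c"
  shows "gamma E w S \<le> c"
  using assms by (intro gamma_le_if_edges_intersect simple_graph_finite_edges edges_in_triple_intersect)

lemma PMAS_gamma_insert_le:
  assumes x: "is_PMAS V E w x"
    and "insert u S \<subseteq> V" "finite S" "S \<noteq> {}" "u \<notin> S" "u \<in> T" "T \<subseteq> insert u S"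
  shows "gamma E w S + x T u \<le> gamma E w (insert u S)"
proof -
  have mono: "x S' i \<le> x T' i" if "S' \<noteq> {}" "S' \<subseteq> T'" "T' \<subseteq> V" "i \<in> S'" for S' T' i
    using x that unfolding is_PMAS_def by blast
  have eff: "(\<Sum>i\<in>S'. x S' i) = gamma E w S'" if "S' \<subseteq> V" "S' \<noteq> {}" for S'
    using x that unfolding is_PMAS_def by blast
  have "gamma E w S + x T u = (\<Sum>i\<in>S. x S i) + x T u"
    using assms by (simp add: eff)
  also have "\<dots> \<le> (\<Sum>i\<in>S. x (insert u S) i) + x (insert u S) u"
    using assms by (intro add_mono sum_mono mono) auto
  also have "\<dots> = gamma E w (insert u S)"
    using assms by (simp add: eff[symmetric])
  finally show ?thesis .
qed

lemma PMAS_gamma_path: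
  assumes x: "is_PMAS V E w x"
    and V: "{i, j, k, l} \<subseteq> V" and "j \<noteq> k" "k \<noteq> i" "j \<noteq> l"
  shows "gamma E w {i, j} + gamma E w {j, k} + gamma E w {k, l}
           \<le> gamma E w {i, j, k} + gamma E w {j, k, l}"
proof -
  have "gamma E w {i, j} + x {j, k} k \<le> gamma E w (insert k {i, j})"
    using assms by (intro PMAS_gamma_insert_le[OF x]) auto
  also have "insert k {i, j} = {i, j, k}"
    by (simp add: insert_commute)
  finally have ijk: "gamma E w {i, j} + x {j, k} k \<le> gamma E w {i, j, k}" .
  have jkl: "gamma E w {k, l} + x {j, k} j \<le> gamma E w {j, k, l}"
    using assms by (intro PMAS_gamma_insert_le[OF x]) auto
  have "{j, k} \<subseteq> V"
    using V by simp
  then have "(\<Sum>i\<in>{j, k}. x {j, k} i) = gamma E w {j, k}"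
    using x unfolding is_PMAS_def by blast
  then have "x {j, k} j + x {j, k} k = gamma E w {j, k}"
    using \<open>j \<noteq> k\<close> by simp
  with ijk jkl show ?thesis
    by linarith
qed

lemma PMAS_edge_weights_path:
  assumes x: "is_PMAS V E w x" and "finite E"
    and "{i, j, k, l} \<subseteq> V" "j \<noteq> k" "k \<noteq> i" "j \<noteq> l"
    and "{i, j} \<in> E" "{j, k} \<in> E" "{k, l} \<in> E"
  shows "w {i, j} + w {j, k} + w {k, l} \<le> gamma E w {i, j, k} + gamma E w {j, k, l}"
proof -
  have "w {i, j} + w {j, k} + w {k, l} \<le> gamma E w {i, j} + gamma E w {j, k} + gamma E w {k, l}"
    using assms by (intro add_mono edge_weight_le_gamma) auto
  also have "\<dots> \<le> gamma E w {i, j, k} + gamma E w {j, k, l}"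
    using assms by (intro PMAS_gamma_path[OF x])
  finally show ?thesis .
qed

lemma paw_gamma_triples:
  fixes v1 v2 v3 v4 :: 'a
  assumes G: "simple_graph V E" and wpos: "\<forall>e\<in>E. w e > 0"
    and verts: "{v1, v2, v3, v4} \<subseteq> V" and dist: "distinct [v1, v2, v3, v4]"
    and induced: "{e \<in> E. e \<subseteq> {v1, v2, v3, v4}} = {{v1,v2}, {v2,v3}, {v2,v4}, {v3,v4}}"
    and w23: "w {v2,v3} \<ge> w {v2,v4}"
  shows "gamma E w {v1,v2,v3} \<le> max (w {v1,v2}) (w {v2,v3})"
    and "gamma E w {v2,v3,v4} \<le> max (w {v2,v3}) (w {v3,v4})"
proof -
  have local_edge: "e \<in> {{v1,v2}, {v2,v3}, {v2,v4}, {v3,v4}}"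
    if "e \<in> E" "e \<subseteq> {v1, v2, v3, v4}" for e
    using that induced by blast
  have "{v2,v3} \<in> {e \<in> E. e \<subseteq> {v1, v2, v3, v4}}"
    unfolding induced by simp
  then have nonneg: "0 \<le> w {v2,v3}"
    using wpos by auto
  have card3: "card {a, b, c} \<le> 3" for a b c :: 'a
    by (simp add: card_insert_if)
  show "gamma E w {v1,v2,v3} \<le> max (w {v1,v2}) (w {v2,v3})"
  proof (rule gamma_le_on_triple[OF G _ card3])
    fix e assume e: "e \<in> E" "e \<subseteq> {v1,v2,v3}"
    moreover have "v4 \<notin> e"
      using e(2) dist by auto
    ultimately have "e = {v1,v2} \<or> e = {v2,v3}"
      using local_edge[of e] by blast
    then show "w e \<le> max (w {v1,v2}) (w {v2,v3})"
      by auto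
  qed (use verts nonneg in auto)
  show "gamma E w {v2,v3,v4} \<le> max (w {v2,v3}) (w {v3,v4})"
  proof (rule gamma_le_on_triple[OF G _ card3])
    fix e assume e: "e \<in> E" "e \<subseteq> {v2,v3,v4}"
    moreover have "v1 \<notin> e"
      using e(2) dist by auto
    ultimately have "e = {v2,v3} \<or> e = {v2,v4} \<or> e = {v3,v4}"
      using local_edge[of e] by blast
    then show "w e \<le> max (w {v2,v3}) (w {v3,v4})"
      using w23 by auto
  qed (use verts nonneg in auto)
qed

theorem mainTheorem6:
  fixes V :: "'a set" and E :: "'a set set" and w :: "'a set \<Rightarrow> real"
    and v1 v2 v3 v4 :: 'a
  assumes G: "simple_graph V E"
    and wpos: "\<forall>e\<in>E. w e > 0"
    and verts: "{v1, v2, v3, v4} \<subseteq> V"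
    and dist: "distinct [v1, v2, v3, v4]"
    and induced: "{e \<in> E. e \<subseteq> {v1, v2, v3, v4}} = {{v1,v2}, {v2,v3}, {v2,v4}, {v3,v4}}"
    and w23: "w {v2,v3} \<ge> w {v2,v4}"
    and pm: "population_monotonic V E w"
  shows "w {v2,v3} \<ge> w {v1,v2} + w {v3,v4} \<and> w {v2,v3} \<ge> w {v2,v4} + w {v3,v4}"
proof -
  obtain x where x: "is_PMAS V E w x"
    using pm unfolding population_monotonic_def by blast
  have finE: "finite E"
    using G by (rule simple_graph_finite_edges)
  have inE: "{v1,v2} \<in> E" "{v2,v3} \<in> E" "{v2,v4} \<in> E" "{v3,v4} \<in> E"
    using induced by (simp_all add: set_eq_iff) blast+
  have pos: "w {v1,v2} > 0" "w {v2,v3} > 0" "w {v3,v4} > 0"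
    using wpos inE by auto
  note gamma123 = paw_gamma_triples(1)[OF G wpos verts dist induced w23]
  note gamma234 = paw_gamma_triples(2)[OF G wpos verts dist induced w23]
  have "w {v1,v2} + w {v2,v3} + w {v3,v4} \<le> gamma E w {v1,v2,v3} + gamma E w {v2,v3,v4}"
    using dist verts inE by (intro PMAS_edge_weights_path[OF x finE]) auto
  with gamma123 gamma234 pos have path: "w {v2,v3} \<ge> w {v1,v2} + w {v3,v4}"
    by (simp add: max_def split: if_splits)
  have swap: "{v3,v2} = {v2,v3}" "{v4,v3} = {v3,v4}"
    "{v3,v2,v4} = {v2,v3,v4}" "{v2,v4,v3} = {v2,v3,v4}"
    by blast+
  have "w {v3,v2} + w {v2,v4} + w {v4,v3} \<le> gamma E w {v3,v2,v4} + gamma E w {v2,v4,v3}"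
    using dist verts inE swap by (intro PMAS_edge_weights_path[OF x finE]) auto
  then have "w {v2,v3} + w {v2,v4} + w {v3,v4} \<le> 2 * gamma E w {v2,v3,v4}"
    unfolding swap by linarith
  with gamma234 path pos have "w {v2,v3} \<ge> w {v2,v4} + w {v3,v4}"
    by (simp add: max_def split: if_splits)
  with path show ?thesis ..
qed

end
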